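(* Let $\mathbb{R}_1=\{x\in\mathbb{R}: x\ge 1\}$, $\mathbb{N}_1=\{1,2,3,\dots\}$, and let $U:\mathbb{R}_1\to\mathbb{R}_1$ be defined by \[ U(x)=\begin{cases} \dfrac{x}{2} & \text{if } \lfloor x\rfloor \text{ is even},\\[4pt] \dfrac{3x+1}{2} & \text{if } \lfloor x\rfloor \text{ is odd}.\end{cases}\] If $x\in\mathbb{R}_1$ and $k\in\mathbb{N}_1$ satisfy $U^k(x)=x$, then $x\in\mathbb{N}_1$. Equivalently, the only $U$-cycles are the $T$-cycles, where $T=U|_{\mathbb{N}_1}$ is the integer $3n+1$ function $T(n)=n/2$ for even $n$, $T(n)=(3n+1)/2$ for odd $n$.
   Context: $\lfloor x\rfloor$ denotes the largest integer $\le x$. For a function $f:X\to X$, $f^0$ is the identity and $f^i=f\circ f^{i-1}$. An $f$-cycle is the trajectory $(f^i(z))_{i\ge 0}$ of a point $z$ with $f^n(z)=z$ for some $n\ge 1$. Note that $U$ restricted to $\mathbb{N}_1$ coincides with $T$. *)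

theory Defs
  imports Complex_Main
begin

text \<open>The map U on R_1 = [1,oo). It is defined on all reals here; on [1,oo) it agrees
with the paper's U and maps [1,oo) into itself.\<close>
definition U :: "real \<Rightarrow> real" where
  "U x = (if even \<lfloor>x\<rfloor> then x / 2 else (3 * x + 1) / 2)"

end

theory Submission
  imports Defs
begin

text \<open>The ratio \<open>frac y / y\<close> never increases under \<open>U\<close> on \<open>[1,\<infinity>)\<close>: halving scales
  numerator and denominator alike, while at an odd step the fractional part grows by at most
  the factor \<open>3/2\<close> and the point by the larger factor \<open>(3y+1)/(2y)\<close>. So along a cycle
  the ratio is constant, and if \<open>x\<close> is not an integer every point of the cycle has positive
  fractional part, which rules out odd steps. A cycle made only of halvings is impossible.\<close>

definition frac_ratio :: "real \<Rightarrow> real" where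
  "frac_ratio y = frac y / y"

lemma frac_le_self: "0 \<le> t \<Longrightarrow> frac t \<le> (t::real)"
  by (simp add: frac_def)

lemma U_ge_1:
  assumes "1 \<le> y"
  shows "1 \<le> U y"
proof (cases "even \<lfloor>y\<rfloor>")
  case True
  moreover have "1 \<le> \<lfloor>y\<rfloor>"
    using assms by simp
  ultimately have "2 \<le> \<lfloor>y\<rfloor>"
    by presburger
  with True show ?thesis
    by (simp add: U_def le_floor_iff)
next
  case False
  with assms show ?thesis
    by (simp add: U_def)
qed

lemma funpow_U_ge_1: "1 \<le> y \<Longrightarrow> 1 \<le> (U ^^ i) y"
  by (induction i) (auto simp: U_ge_1)

lemma frac_ratio_U_even:
  assumes "even \<lfloor>y\<rfloor>"
  shows "frac_ratio (U y) = frac_ratio y"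
proof -
  obtain m where m: "\<lfloor>y\<rfloor> = 2 * m"
    using assms by blast
  then have "\<lfloor>y / 2\<rfloor> = m"
    by (simp add: floor_eq_iff)
  with m have "frac (y / 2) = frac y / 2"
    by (simp add: frac_def)
  with assms show ?thesis
    by (simp add: frac_ratio_def U_def)
qed

lemma frac_U_odd:
  assumes "odd \<lfloor>y\<rfloor>"
  shows "frac (U y) \<le> 3 * frac y / 2"
proof -
  obtain m where m: "\<lfloor>y\<rfloor> = 2 * m + 1"
    using assms oddE by blast
  then have "U y = of_int (3 * m + 2) + 3 * frac y / 2"
    using assms by (simp add: U_def frac_def field_simps)
  then have "frac (U y) = frac (3 * frac y / 2)"
    by (simp only: frac_add_of_int_left)
  also have "\<dots> \<le> 3 * frac y / 2"
    by (rule frac_le_self) simp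
  finally show ?thesis .
qed

lemma frac_ratio_U_odd:
  assumes "1 \<le> y" and "odd \<lfloor>y\<rfloor>"
  shows "frac_ratio (U y) \<le> 3 * frac y / (3 * y + 1)"
proof -
  have U: "U y = (3 * y + 1) / 2"
    using assms(2) by (simp add: U_def)
  have "frac_ratio (U y) \<le> (3 * frac y / 2) / U y"
    unfolding frac_ratio_def
    using U_ge_1[OF assms(1)] by (intro divide_right_mono frac_U_odd assms(2)) simp
  also have "\<dots> = 3 * frac y / (3 * y + 1)"
    by (simp add: U)
  finally show ?thesis .
qed

lemma frac_ratio_U_le:
  assumes "1 \<le> y"
  shows "frac_ratio (U y) \<le> frac_ratio y"
proof (cases "even \<lfloor>y\<rfloor>")
  case True
  then show ?thesis
    by (simp add: frac_ratio_U_even)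
next
  case False
  have "3 * frac y / (3 * y + 1) \<le> frac y / y"
    using assms by (simp add: field_simps)
  with frac_ratio_U_odd[OF assms False] show ?thesis
    by (simp add: frac_ratio_def)
qed

lemma frac_ratio_U_less:
  assumes "1 \<le> y" and "odd \<lfloor>y\<rfloor>" and "0 < frac y"
  shows "frac_ratio (U y) < frac_ratio y"
proof -
  have "3 * frac y / (3 * y + 1) < frac y / y"
    using assms by (simp add: field_simps)
  with frac_ratio_U_odd[OF assms(1,2)] show ?thesis
    by (simp add: frac_ratio_def)
qed

lemma frac_ratio_funpow_U_le: "1 \<le> y \<Longrightarrow> frac_ratio ((U ^^ i) y) \<le> frac_ratio y"
proof (induction i arbitrary: y)
  case (Suc i)
  have "frac_ratio ((U ^^ i) (U y)) \<le> frac_ratio (U y)"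
    using Suc.IH U_ge_1[OF Suc.prems] .
  with frac_ratio_U_le[OF Suc.prems] show ?case
    by (simp add: funpow_swap1)
qed simp

lemma periodic_point_floor_even:
  assumes x: "1 \<le> x" "0 < frac x" and cycle: "(U ^^ k) x = x" and "i < k"
  shows "even \<lfloor>(U ^^ i) x\<rfloor>"
proof (rule ccontr)
  assume odd: "odd \<lfloor>(U ^^ i) x\<rfloor>"
  define y where "y = (U ^^ i) x"
  have y: "1 \<le> y"
    unfolding y_def using funpow_U_ge_1 x(1) .
  have "(U ^^ (k - Suc i)) (U y) = x"
    using cycle \<open>i < k\<close> funpow_add[of "k - Suc i" "Suc i" U]
    by (simp add: y_def)
  then have closing: "frac_ratio x \<le> frac_ratio (U y)"
    using frac_ratio_funpow_U_le[OF U_ge_1[OF y]] by metis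
  have "frac_ratio y \<le> frac_ratio x"
    unfolding y_def using frac_ratio_funpow_U_le x(1) .
  moreover have "0 < frac_ratio x"
    using x by (simp add: frac_ratio_def)
  ultimately have "0 < frac_ratio y"
    using closing frac_ratio_U_le[OF y] by simp
  then have "0 < frac y"
    using y frac_ge_0[of y] unfolding frac_ratio_def by (cases "frac y = 0") auto
  then have "frac_ratio (U y) < frac_ratio y"
    using frac_ratio_U_less y odd by (simp add: y_def)
  with closing \<open>frac_ratio y \<le> frac_ratio x\<close> show False
    by simp
qed

lemma funpow_U_halving:
  assumes "\<And>i. i < k \<Longrightarrow> even \<lfloor>(U ^^ i) x\<rfloor>"
  shows "(U ^^ k) x = x / 2 ^ k"
  using assms
proof (induction k)
  case (Suc k)
  have "even \<lfloor>(U ^^ k) x\<rfloor>"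
    using Suc.prems by simp
  then have "(U ^^ Suc k) x = (U ^^ k) x / 2"
    by (simp add: U_def)
  with Suc show ?case
    by simp
qed simp

theorem theorem1:
  fixes x :: real and k :: nat
  assumes "x \<ge> 1" and "k \<ge> 1" and "(U ^^ k) x = x"
  shows "\<exists>n::nat. n \<ge> 1 \<and> x = real n"
proof (cases "frac x = 0")
  case True
  then obtain n where "x = of_int n"
    by (auto elim: Ints_cases)
  with assms(1) show ?thesis
    by (intro exI[of _ "nat n"]) simp
next
  case False
  then have "0 < frac x"
    using frac_ge_0 by (metis less_eq_real_def)
  then have "x = x / 2 ^ k"
    using assms periodic_point_floor_even funpow_U_halving by metis
  moreover have "(2::real) ^ k > 1"
    using assms(2) by simp
  ultimately show ?thesis
    using assms(1) by (simp add: field_simps)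
qed

end
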